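(* Fix $\epsilon_2>0$ and $(u_\pm,v_\pm)$ with $v_\pm>0$ and $u_->u_++2\epsilon_2$, and for small $\epsilon_1>0$ let $(u_*^{\epsilon_2},v_*^{\epsilon_2})$ and $\sigma_1^{\epsilon_2},\sigma_2^{\epsilon_2}$ be the intermediate state and shock speeds of the two-shock Riemann solution. Then $$\lim_{\epsilon_1\to0}u_*^{\epsilon_2}=\frac{u_-+u_+}{2}+\epsilon_2,\qquad \lim_{\epsilon_1\to0}\sigma_1^{\epsilon_2}=\lim_{\epsilon_1\to0}\sigma_2^{\epsilon_2}=\frac{u_-+u_+}{2}.$$
   Context: Perturbed Brio system: $u_t+(\tfrac12u^2+\tfrac12\epsilon_1v^2)_x=0$, $v_t+(uv-\epsilon_2v)_x=0$, $\epsilon_1,\epsilon_2>0$, $v>0$. The two-shock intermediate state $(u_*,v_* )$ satisfies $v_*>\max(v_-,v_+)$, $u_+<u_*<u_-$, $$u_*=u_-+(v_*-v_-)\frac{\epsilon_2-\sqrt{\epsilon_2^2+4\epsilon_1(v_*+v_-)^2}}{v_*+v_-},\qquad u_+=u_*+(v_+-v_* )\frac{\epsilon_2+\sqrt{\epsilon_2^2+4\epsilon_1(v_*+v_+)^2}}{v_*+v_+},$$ with shock speeds $\sigma_1=u_-+\frac{v_*(u_*-u_-)}{v_*-v_-}-\epsilon_2$, $\sigma_2=u_++\frac{v_*(u_+-u_* )}{v_+-v_*}-\epsilon_2$. *)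

theory Defs
  imports Complex_Main
begin

definition two_shock_state ::
  "real \<Rightarrow> real \<Rightarrow> real \<Rightarrow> real \<Rightarrow> real \<Rightarrow> real \<Rightarrow> real \<Rightarrow> real \<Rightarrow> bool" where
  "two_shock_state e1 e2 um vm up vp us vs \<longleftrightarrow>
     vs > max vm vp \<and> up < us \<and> us < um \<and>
     us = um + (vs - vm) * (e2 - sqrt (e2\<^sup>2 + 4 * e1 * (vs + vm)\<^sup>2)) / (vs + vm) \<and>
     up = us + (vp - vs) * (e2 + sqrt (e2\<^sup>2 + 4 * e1 * (vs + vp)\<^sup>2)) / (vs + vp)"

definition shock_speed1 :: "real \<Rightarrow> real \<Rightarrow> real \<Rightarrow> real \<Rightarrow> real \<Rightarrow> real" where
  "shock_speed1 e2 um vm us vs = um + vs * (us - um) / (vs - vm) - e2"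

definition shock_speed2 :: "real \<Rightarrow> real \<Rightarrow> real \<Rightarrow> real \<Rightarrow> real \<Rightarrow> real" where
  "shock_speed2 e2 up vp us vs = up + vs * (up - us) / (vp - vs) - e2"

end

theory Submission
  imports Defs
begin

text \<open>As \<open>e1 \<rightarrow> 0\<close> the middle density \<open>v\<^sub>*\<close> blows up like \<open>1 / \<surd>e1\<close>, but slowly enough
  that \<open>e1 v\<^sub>* \<rightarrow> 0\<close>: the total jump \<open>u\<^sub>- - u\<^sub>+ > 2 e2\<close> is at most \<open>2 e2 + 8 \<surd>e1 v\<^sub>*\<close>, and
  the right jump alone is at least \<open>2 \<surd>e1 (v\<^sub>* - v\<^sub>+)\<close>. Consequently the factors
  \<open>(v\<^sub>* - v\<^sub>\<plusminus>)/(v\<^sub>* + v\<^sub>\<plusminus>)\<close> in the two Hugoniot relations tend to 1, and the two square roots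
  \<open>\<surd>(e2\<^sup>2 + 4 e1 (v\<^sub>* + v\<^sub>\<plusminus>)\<^sup>2)\<close> merge, their difference being \<open>O(e1 v\<^sub>*)\<close>. Hence the right
  jump \<open>u\<^sub>* - u\<^sub>+\<close> exceeds the left jump \<open>u\<^sub>- - u\<^sub>*\<close> by \<open>2 e2\<close> in the limit; as the two jumps
  add up to \<open>u\<^sub>- - u\<^sub>+\<close>, this determines \<open>lim u\<^sub>*\<close>, and the speeds follow since
  \<open>v\<^sub>*/(v\<^sub>* - v\<^sub>\<plusminus>) \<rightarrow> 1\<close>.\<close>

definition shock_root :: "real \<Rightarrow> real \<Rightarrow> real \<Rightarrow> real" where
  "shock_root e1 e2 w = sqrt (e2\<^sup>2 + 4 * e1 * w\<^sup>2)"

lemma shock_root_eq_sqrt_sum_squares: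
  assumes "0 \<le> e1"
  shows "shock_root e1 e2 w = sqrt (e2\<^sup>2 + (2 * sqrt e1 * w)\<^sup>2)"
  using assms by (simp add: shock_root_def power_mult_distrib)

lemma shock_root_ge:
  assumes "0 \<le> e1"
  shows "e2 \<le> shock_root e1 e2 w"
  using assms by (simp add: shock_root_eq_sqrt_sum_squares)

lemma shock_root_ge_linear:
  assumes "0 \<le> e1"
  shows "2 * sqrt e1 * w \<le> shock_root e1 e2 w"
  using assms by (simp add: shock_root_eq_sqrt_sum_squares)

lemma shock_root_le_linear:
  assumes "0 \<le> e1" "0 \<le> e2" "0 \<le> w"
  shows "shock_root e1 e2 w \<le> e2 + 2 * sqrt e1 * w"
  using assms by (simp add: shock_root_eq_sqrt_sum_squares sqrt_sum_squares_le_sum)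

lemma abs_sqrt_diff_le:
  fixes a b m :: real
  assumes "0 \<le> a" "0 \<le> b" "0 < m" "m \<le> sqrt a + sqrt b"
  shows "\<bar>sqrt a - sqrt b\<bar> \<le> \<bar>a - b\<bar> / m"
proof -
  have "\<bar>sqrt a - sqrt b\<bar> * m \<le> \<bar>sqrt a - sqrt b\<bar> * (sqrt a + sqrt b)"
    using assms by (intro mult_left_mono) auto
  also have "\<dots> = \<bar>(sqrt a - sqrt b) * (sqrt a + sqrt b)\<bar>"
    using assms by (simp add: abs_mult)
  also have "\<dots> = \<bar>a - b\<bar>"
    using assms by (simp add: algebra_simps)
  finally show ?thesis
    using assms by (simp add: pos_le_divide_eq)
qed

lemma abs_shock_root_diff_le:
  assumes "0 \<le> e1" "0 < e2"
  shows "\<bar>shock_root e1 e2 w - shock_root e1 e2 w'\<bar> \<le> 2 * e1 * \<bar>w\<^sup>2 - w'\<^sup>2\<bar> / e2"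
proof -
  have "2 * e2 \<le> shock_root e1 e2 w + shock_root e1 e2 w'"
    using shock_root_ge[OF assms(1), of e2 w] shock_root_ge[OF assms(1), of e2 w'] by linarith
  then have "\<bar>shock_root e1 e2 w - shock_root e1 e2 w'\<bar>
      \<le> \<bar>(e2\<^sup>2 + 4 * e1 * w\<^sup>2) - (e2\<^sup>2 + 4 * e1 * w'\<^sup>2)\<bar> / (2 * e2)"
    using assms unfolding shock_root_def by (intro abs_sqrt_diff_le) auto
  also have "\<dots> = 2 * e1 * \<bar>w\<^sup>2 - w'\<^sup>2\<bar> / e2"
    using assms by (simp add: abs_mult flip: right_diff_distrib)
  finally show ?thesis .
qed

lemma tendsto_shifted_ratio_1:
  fixes f :: "'a \<Rightarrow> real"
  assumes "filterlim f at_top F"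
  shows "((\<lambda>x. (f x + a) / (f x + b)) \<longlongrightarrow> 1) F"
proof -
  have "((\<lambda>x. (1 + a * inverse (f x)) / (1 + b * inverse (f x))) \<longlongrightarrow> (1 + a * 0) / (1 + b * 0)) F"
    by (intro tendsto_intros tendsto_inverse_0_at_top assms) simp
  then have lim: "((\<lambda>x. (1 + a * inverse (f x)) / (1 + b * inverse (f x))) \<longlongrightarrow> 1) F"
    by simp
  have eq: "(1 + a * inverse y) / (1 + b * inverse y) = (y + a) / (y + b)" if "y \<noteq> 0" for y
  proof -
    have "(y + a) / (y + b) = (y * (1 + a * inverse y)) / (y * (1 + b * inverse y))"
      using that by (simp add: algebra_simps)
    then show ?thesis
      using that by simp
  qed
  have "\<forall>\<^sub>F x in F. f x \<noteq> 0"
    using assms unfolding filterlim_at_top_dense by (auto elim!: allE[of _ 0] eventually_mono)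
  then have "\<forall>\<^sub>F x in F. (1 + a * inverse (f x)) / (1 + b * inverse (f x)) = (f x + a) / (f x + b)"
    by (rule eventually_mono) (rule eq)
  with lim show ?thesis
    by (rule Lim_transform_eventually)
qed

lemma tendsto_bounded_mult_tendsto_1:
  fixes f g :: "'a \<Rightarrow> real"
  assumes "(g \<longlongrightarrow> 1) F" "\<forall>\<^sub>F x in F. \<bar>f x\<bar> \<le> B"
  shows "((\<lambda>x. f x * g x - f x) \<longlongrightarrow> 0) F"
proof (rule tendsto_0_le)
  show "((\<lambda>x. g x - 1) \<longlongrightarrow> 0) F"
    using tendsto_diff[OF assms(1) tendsto_const[of 1]] by simp
  show "\<forall>\<^sub>F x in F. norm (f x * g x - f x) \<le> norm (g x - 1) * B"
  proof (rule eventually_mono[OF assms(2)])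
    fix x
    assume "\<bar>f x\<bar> \<le> B"
    then have "\<bar>f x\<bar> * \<bar>g x - 1\<bar> \<le> B * \<bar>g x - 1\<bar>"
      by (rule mult_right_mono) simp
    moreover have "\<bar>f x * g x - f x\<bar> = \<bar>f x\<bar> * \<bar>g x - 1\<bar>"
      by (metis abs_mult mult.right_neutral right_diff_distrib)
    ultimately show "norm (f x * g x - f x) \<le> norm (g x - 1) * B"
      by (simp add: mult.commute)
  qed
qed

lemma sqrt_tendsto_0_at_right: "(sqrt \<longlongrightarrow> 0) (at_right 0)"
  using tendsto_real_sqrt[OF tendsto_ident_at[of "0::real" "{0<..}"]] by simp

lemma two_shock_state_jumps:
  assumes "two_shock_state e1 e2 um vm up vp us vs"
  shows "um - us = (vs - vm) / (vs + vm) * (shock_root e1 e2 (vs + vm) - e2)"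
    and "us - up = (vs - vp) / (vs + vp) * (shock_root e1 e2 (vs + vp) + e2)"
proof -
  have "um - us = - ((vs - vm) * (e2 - shock_root e1 e2 (vs + vm)) / (vs + vm))"
    using assms unfolding two_shock_state_def shock_root_def by auto
  then show "um - us = (vs - vm) / (vs + vm) * (shock_root e1 e2 (vs + vm) - e2)"
    by (simp only: minus_divide_left mult_minus_right[symmetric] minus_diff_eq times_divide_eq_left)
  have "us - up = - ((vp - vs) * (e2 + shock_root e1 e2 (vs + vp)) / (vs + vp))"
    using assms unfolding two_shock_state_def shock_root_def by auto
  also have "(vp - vs) * (e2 + shock_root e1 e2 (vs + vp)) = - ((vs - vp) * (shock_root e1 e2 (vs + vp) + e2))"
    by (simp add: algebra_simps)
  finally show "us - up = (vs - vp) / (vs + vp) * (shock_root e1 e2 (vs + vp) + e2)"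
    by simp
qed

lemma two_shock_state_lower_bound:
  assumes st: "two_shock_state e1 e2 um vm up vp us vs"
    and "0 \<le> e1" "0 \<le> e2" "0 < vm" "0 < vp"
  shows "um - up - 2 * e2 \<le> 8 * sqrt e1 * vs"
proof -
  have vs: "vm < vs" "vp < vs"
    using st by (auto simp: two_shock_state_def)
  have "um - us \<le> shock_root e1 e2 (vs + vm) - e2"
    unfolding two_shock_state_jumps(1)[OF st] using assms vs shock_root_ge[of e1 e2 "vs + vm"]
    by (intro mult_left_le_one_le) auto
  also have "\<dots> \<le> 2 * sqrt e1 * (vs + vm)"
    using assms vs shock_root_le_linear[of e1 e2 "vs + vm"] by simp
  finally have left: "um - us \<le> 2 * sqrt e1 * (vs + vm)" .
  have "us - up \<le> shock_root e1 e2 (vs + vp) + e2"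
    unfolding two_shock_state_jumps(2)[OF st] using assms vs shock_root_ge[of e1 e2 "vs + vp"]
    by (intro mult_left_le_one_le) auto
  also have "\<dots> \<le> 2 * e2 + 2 * sqrt e1 * (vs + vp)"
    using assms vs shock_root_le_linear[of e1 e2 "vs + vp"] by simp
  finally have right: "us - up \<le> 2 * e2 + 2 * sqrt e1 * (vs + vp)" .
  have "sqrt e1 * (2 * vs + vm + vp) \<le> sqrt e1 * (4 * vs)"
    using assms vs by (intro mult_left_mono) auto
  with left right show ?thesis
    by (simp add: algebra_simps)
qed

lemma two_shock_state_upper_bound:
  assumes st: "two_shock_state e1 e2 um vm up vp us vs"
    and "0 \<le> e1" "0 \<le> e2" "0 < vp"
  shows "2 * sqrt e1 * (vs - vp) \<le> um - up"
proof -
  have vs: "vp < vs" "us < um"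
    using st by (auto simp: two_shock_state_def)
  have "2 * sqrt e1 * (vs - vp) = (vs - vp) / (vs + vp) * (2 * sqrt e1 * (vs + vp))"
    using assms vs by simp
  also have "\<dots> \<le> (vs - vp) / (vs + vp) * (shock_root e1 e2 (vs + vp) + e2)"
    using assms vs shock_root_ge_linear[of e1 "vs + vp" e2] by (intro mult_left_mono) auto
  also have "\<dots> = us - up"
    using two_shock_state_jumps(2)[OF st] by simp
  finally show ?thesis
    using vs by simp
qed

locale brio_two_shock_family =
  fixes e2 um vm up vp :: real and us vs :: "real \<Rightarrow> real"
  assumes e2_pos: "0 < e2" and vm_pos: "0 < vm" and vp_pos: "0 < vp"
    and jump_gt: "up + 2 * e2 < um"
    and two_shock: "\<forall>\<^sub>F e1 in at_right 0. two_shock_state e1 e2 um vm up vp (us e1) (vs e1)"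
begin

lemma eventually_two_shock_pos:
  "\<forall>\<^sub>F e in at_right 0. 0 < e \<and> two_shock_state e e2 um vm up vp (us e) (vs e)"
  using eventually_conj[OF eventually_at_right_less two_shock] .

lemma inverse_vs_tendsto_0: "((\<lambda>e. inverse (vs e)) \<longlongrightarrow> 0) (at_right 0)"
proof (rule tendsto_sandwich[where f = "\<lambda>_. 0" and h = "\<lambda>e. 8 * sqrt e / (um - up - 2 * e2)"])
  have "\<forall>\<^sub>F e in at_right 0. 0 \<le> inverse (vs e) \<and> inverse (vs e) \<le> 8 * sqrt e / (um - up - 2 * e2)"
    using eventually_two_shock_pos
  proof eventually_elim
    case (elim e)
    then have "0 < vs e"
      using vm_pos by (auto simp: two_shock_state_def)
    moreover have "um - up - 2 * e2 \<le> 8 * sqrt e * vs e"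
      using two_shock_state_lower_bound[of e e2 um vm up vp "us e" "vs e"] elim e2_pos vm_pos vp_pos
      by auto
    ultimately show ?case
      using jump_gt by (simp add: field_simps)
  qed
  then show "\<forall>\<^sub>F e in at_right 0. 0 \<le> inverse (vs e)"
    and "\<forall>\<^sub>F e in at_right 0. inverse (vs e) \<le> 8 * sqrt e / (um - up - 2 * e2)"
    by (auto elim: eventually_mono)
  have "((\<lambda>e. 8 * sqrt e / (um - up - 2 * e2)) \<longlongrightarrow> 8 * 0 / (um - up - 2 * e2)) (at_right 0)"
    by (intro tendsto_intros sqrt_tendsto_0_at_right) (use jump_gt in simp)
  then show "((\<lambda>e. 8 * sqrt e / (um - up - 2 * e2)) \<longlongrightarrow> 0) (at_right 0)"
    by simp
qed simp

lemma vs_tendsto_at_top: "filterlim vs at_top (at_right 0)"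
proof -
  have "\<forall>\<^sub>F e in at_right 0. 0 < inverse (vs e)"
    using eventually_two_shock_pos by eventually_elim (use vm_pos in \<open>auto simp: two_shock_state_def\<close>)
  then have "filterlim (\<lambda>e. inverse (inverse (vs e))) at_top (at_right 0)"
    by (rule filterlim_inverse_at_top[OF inverse_vs_tendsto_0])
  then show ?thesis
    by simp
qed

lemma eps_vs_tendsto_0: "((\<lambda>e. e * vs e) \<longlongrightarrow> 0) (at_right 0)"
proof (rule tendsto_sandwich[where f = "\<lambda>_. 0" and h = "\<lambda>e. sqrt e * ((um - up) / 2 + sqrt e * vp)"])
  have "\<forall>\<^sub>F e in at_right 0. 0 \<le> e * vs e \<and> e * vs e \<le> sqrt e * ((um - up) / 2 + sqrt e * vp)"
    using eventually_two_shock_pos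
  proof eventually_elim
    case (elim e)
    then have "0 < vs e"
      using vm_pos by (auto simp: two_shock_state_def)
    have "2 * sqrt e * (vs e - vp) \<le> um - up"
      using two_shock_state_upper_bound[of e e2 um vm up vp "us e" "vs e"] elim e2_pos vp_pos by auto
    then have "sqrt e * vs e \<le> (um - up) / 2 + sqrt e * vp"
      by (simp add: field_simps)
    then have "sqrt e * (sqrt e * vs e) \<le> sqrt e * ((um - up) / 2 + sqrt e * vp)"
      using elim by (intro mult_left_mono) auto
    then show ?case
      using elim \<open>0 < vs e\<close> by (simp add: mult.assoc[symmetric])
  qed
  then show "\<forall>\<^sub>F e in at_right 0. 0 \<le> e * vs e"
    and "\<forall>\<^sub>F e in at_right 0. e * vs e \<le> sqrt e * ((um - up) / 2 + sqrt e * vp)"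
    by (auto elim: eventually_mono)
  have "((\<lambda>e. sqrt e * ((um - up) / 2 + sqrt e * vp)) \<longlongrightarrow> 0 * ((um - up) / 2 + 0 * vp)) (at_right 0)"
    by (intro tendsto_intros sqrt_tendsto_0_at_right)
  then show "((\<lambda>e. sqrt e * ((um - up) / 2 + sqrt e * vp)) \<longlongrightarrow> 0) (at_right 0)"
    by simp
qed simp

lemma shock_root_diff_tendsto_0:
  "((\<lambda>e. shock_root e e2 (vs e + vp) - shock_root e e2 (vs e + vm)) \<longlongrightarrow> 0) (at_right 0)"
proof (rule tendsto_0_le[where K = "2 * \<bar>vp - vm\<bar> / e2"])
  have "((\<lambda>e. 2 * (e * vs e) + e * (vp + vm)) \<longlongrightarrow> 2 * 0 + 0 * (vp + vm)) (at_right 0)"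
    by (intro tendsto_intros eps_vs_tendsto_0)
  then show "((\<lambda>e. 2 * (e * vs e) + e * (vp + vm)) \<longlongrightarrow> 0) (at_right 0)"
    by simp
  show "\<forall>\<^sub>F e in at_right 0. norm (shock_root e e2 (vs e + vp) - shock_root e e2 (vs e + vm))
      \<le> norm (2 * (e * vs e) + e * (vp + vm)) * (2 * \<bar>vp - vm\<bar> / e2)"
    using eventually_two_shock_pos
  proof eventually_elim
    case (elim e)
    then have "0 < vs e"
      using vm_pos by (auto simp: two_shock_state_def)
    have "\<bar>shock_root e e2 (vs e + vp) - shock_root e e2 (vs e + vm)\<bar>
        \<le> 2 * e * \<bar>(vs e + vp)\<^sup>2 - (vs e + vm)\<^sup>2\<bar> / e2"
      using elim e2_pos by (intro abs_shock_root_diff_le) auto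
    also have "(vs e + vp)\<^sup>2 - (vs e + vm)\<^sup>2 = (vp - vm) * (2 * vs e + vp + vm)"
      by (simp add: power2_eq_square algebra_simps)
    also have "2 * e * \<bar>(vp - vm) * (2 * vs e + vp + vm)\<bar> / e2
        = e * (2 * vs e + vp + vm) * (2 * \<bar>vp - vm\<bar> / e2)"
      using \<open>0 < vs e\<close> vm_pos vp_pos by (simp add: abs_mult)
    also have "e * (2 * vs e + vp + vm) = \<bar>2 * (e * vs e) + e * (vp + vm)\<bar>"
      using elim \<open>0 < vs e\<close> vm_pos vp_pos by (simp add: algebra_simps)
    finally show ?case
      by simp
  qed
qed

lemma jump_difference_tendsto: "((\<lambda>e. (us e - up) - (um - us e)) \<longlongrightarrow> 2 * e2) (at_right 0)"
proof -
  define ratio where "ratio v e = (vs e + v) / (vs e - v)" for v e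
  have ratio_tendsto: "(ratio v \<longlongrightarrow> 1) (at_right 0)" for v
    using tendsto_shifted_ratio_1[OF vs_tendsto_at_top, of v "- v"] by (simp add: ratio_def[abs_def])
  \<comment> \<open>Dividing the jumps by the ratios recovers the roots, whose difference vanishes; the
    remaining terms vanish because the jumps are bounded by \<open>um - up\<close>.\<close>
  define rhs where "rhs e = (shock_root e e2 (vs e + vp) - shock_root e e2 (vs e + vm) + 2 * e2)
    - ((us e - up) * ratio vp e - (us e - up)) + ((um - us e) * ratio vm e - (um - us e))" for e
  have pointwise: "\<forall>\<^sub>F e in at_right 0.
      \<bar>um - us e\<bar> \<le> um - up \<and> \<bar>us e - up\<bar> \<le> um - up \<and> rhs e = (us e - up) - (um - us e)"
    using eventually_two_shock_pos
  proof eventually_elim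
    case (elim e)
    then have vs: "vm < vs e" "vp < vs e" and us: "up < us e" "us e < um"
      by (auto simp: two_shock_state_def)
    have "(um - us e) * ratio vm e = shock_root e e2 (vs e + vm) - e2"
      using two_shock_state_jumps(1)[OF conjunct2[OF elim]] vs vm_pos by (simp add: ratio_def)
    moreover have "(us e - up) * ratio vp e = shock_root e e2 (vs e + vp) + e2"
      using two_shock_state_jumps(2)[OF conjunct2[OF elim]] vs vp_pos by (simp add: ratio_def)
    ultimately show ?case
      using us by (auto simp: rhs_def)
  qed
  have "(rhs \<longlongrightarrow> 0 + 2 * e2 - 0 + 0) (at_right 0)"
    unfolding rhs_def using pointwise
    by (intro tendsto_intros shock_root_diff_tendsto_0 tendsto_bounded_mult_tendsto_1 ratio_tendsto)
      (auto elim: eventually_mono)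
  moreover have "\<forall>\<^sub>F e in at_right 0. rhs e = (us e - up) - (um - us e)"
    using pointwise by (rule eventually_mono) simp
  ultimately show ?thesis
    by (simp add: Lim_transform_eventually)
qed

lemma us_tendsto: "(us \<longlongrightarrow> (um + up) / 2 + e2) (at_right 0)"
proof -
  have "((\<lambda>e. (um + up + ((us e - up) - (um - us e))) / 2) \<longlongrightarrow> (um + up + 2 * e2) / 2) (at_right 0)"
    by (intro tendsto_intros jump_difference_tendsto) simp
  moreover have "(\<lambda>e. (um + up + ((us e - up) - (um - us e))) / 2) = us"
    by (simp add: fun_eq_iff)
  ultimately show ?thesis
    by (simp add: add_divide_distrib)
qed

end

theorem lemma6p3:
  fixes e2 um vm up vp :: real
    and us vs :: "real \<Rightarrow> real"
  assumes "e2 > 0" and "vm > 0" and "vp > 0" and "um > up + 2 * e2"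
    and "\<forall>\<^sub>F e1 in at_right 0. two_shock_state e1 e2 um vm up vp (us e1) (vs e1)"
  shows "(us \<longlongrightarrow> (um + up) / 2 + e2) (at_right 0) \<and>
         ((\<lambda>e1. shock_speed1 e2 um vm (us e1) (vs e1)) \<longlongrightarrow> (um + up) / 2) (at_right 0) \<and>
         ((\<lambda>e1. shock_speed2 e2 up vp (us e1) (vs e1)) \<longlongrightarrow> (um + up) / 2) (at_right 0)"
proof -
  interpret brio_two_shock_family e2 um vm up vp us vs
    using assms by unfold_locales auto
  have ratio: "((\<lambda>e. vs e / (vs e - v)) \<longlongrightarrow> 1) (at_right 0)" for v
    using tendsto_shifted_ratio_1[OF vs_tendsto_at_top, of 0 "- v"] by simp
  have "shock_speed1 e2 um vm (us e) (vs e) = um + vs e / (vs e - vm) * (us e - um) - e2"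
    and "shock_speed2 e2 up vp (us e) (vs e) = up + vs e / (vs e - vp) * (us e - up) - e2" for e
    unfolding shock_speed1_def shock_speed2_def
    by (simp, metis minus_diff_eq minus_divide_divide mult_minus_right times_divide_eq_left)
  moreover have "((\<lambda>e. um + vs e / (vs e - vm) * (us e - um) - e2)
      \<longlongrightarrow> um + 1 * ((um + up) / 2 + e2 - um) - e2) (at_right 0)"
    and "((\<lambda>e. up + vs e / (vs e - vp) * (us e - up) - e2)
      \<longlongrightarrow> up + 1 * ((um + up) / 2 + e2 - up) - e2) (at_right 0)"
    by (intro tendsto_intros ratio us_tendsto)+
  ultimately show ?thesis
    using us_tendsto by simp
qed

end
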